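(* Fix a prime $p$ and an integer $h\ge 1$, and work in the category $\mathcal{C}_{p^h}$ (defined in the context). Let $\iota_R\colon (A,I_A,\psi_A)\to (R,I_R,\psi_R)$ and $\iota_S\colon (A,I_A,\psi_A)\to (S,I_S,\psi_S)$ be morphisms in $\mathcal{C}_{p^h}$. Suppose that $I_R=\iota_R(I_A)R$ and that $(S,I_S,\psi_S)$ is complete and perfect. Let $\mu\colon R\to S$ be a ring homomorphism with $\mu\iota_R=\iota_S$. Then there exists a unique morphism $\widehat\mu\colon (R,I_R,\psi_R)\to (S,I_S,\psi_S)$ in $\mathcal{C}_{p^h}$ such that $\widehat\mu\iota_R=\iota_S$ and $\widehat\mu(x)\equiv \mu(x) \bmod I_S$ for all $x\in R$.
   Context: $\mathcal{C}_{p^h}$ is the category whose objects are triples $(R,I_R,\psi_R)$ with $R$ a commutative ring, $I_R\subseteq R$ an ideal with $p\in I_R$, and $\psi_R\colon R\to R$ a ring endomorphism such that $\psi_R(x)\equiv x^{p^h}\bmod I_R$ for all $x\in R$. A morphism $(R,I_R,\psi_R)\to(S,I_S,\psi_S)$ is a ring homomorphism $\mu\colon R\to S$ with $\mu(I_R)\subseteq I_S$ and $\mu\psi_R=\psi_S\mu$. An object is complete if $R\to\lim_k R/I_R^k$ is an isomorphism, and perfect if $\psi_R$ is an isomorphism with $\psi_R(I_R)=I_R$. *)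

theory Defs
  imports Main "HOL-Computational_Algebra.Primes"
begin

definition is_ideal :: "'a::comm_ring_1 set \<Rightarrow> bool" where
  "is_ideal I \<longleftrightarrow> 0 \<in> I \<and> (\<forall>x\<in>I. \<forall>y\<in>I. x + y \<in> I) \<and> (\<forall>r. \<forall>x\<in>I. r * x \<in> I)"

definition ideal_span :: "'a::comm_ring_1 set \<Rightarrow> 'a set" where
  "ideal_span X = \<Inter>{J. is_ideal J \<and> X \<subseteq> J}"

fun ideal_pow :: "'a::comm_ring_1 set \<Rightarrow> nat \<Rightarrow> 'a set" where
  "ideal_pow I 0 = UNIV"
| "ideal_pow I (Suc k) = ideal_span {a * b | a b. a \<in> I \<and> b \<in> ideal_pow I k}"

definition is_ring_hom :: "('a::comm_ring_1 \<Rightarrow> 'b::comm_ring_1) \<Rightarrow> bool" where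
  "is_ring_hom f \<longleftrightarrow> f 1 = 1 \<and> (\<forall>x y. f (x + y) = f x + f y) \<and> (\<forall>x y. f (x * y) = f x * f y)"

definition is_obj :: "nat \<Rightarrow> nat \<Rightarrow> 'a::comm_ring_1 set \<Rightarrow> ('a \<Rightarrow> 'a) \<Rightarrow> bool" where
  "is_obj p h I \<psi> \<longleftrightarrow> is_ideal I \<and> of_nat p \<in> I \<and> is_ring_hom \<psi> \<and>
     (\<forall>x. \<psi> x - x ^ (p ^ h) \<in> I)"

definition is_mor :: "'a::comm_ring_1 set \<Rightarrow> ('a \<Rightarrow> 'a) \<Rightarrow> 'b::comm_ring_1 set \<Rightarrow> ('b \<Rightarrow> 'b)
    \<Rightarrow> ('a \<Rightarrow> 'b) \<Rightarrow> bool" where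
  "is_mor I \<psi> J \<phi> \<mu> \<longleftrightarrow> is_ring_hom \<mu> \<and> \<mu> ` I \<subseteq> J \<and> \<mu> \<circ> \<psi> = \<phi> \<circ> \<mu>"

(* R \<rightarrow> lim_k R/I^k is an isomorphism: injective and surjective, where an
   element of the inverse limit is represented by a compatible family of lifts
   x k \<in> R of classes in R/I^k, compatibility meaning x (k+1) \<equiv> x k mod I^k *)
definition is_complete :: "'a::comm_ring_1 set \<Rightarrow> bool" where
  "is_complete I \<longleftrightarrow> (\<Inter>k. ideal_pow I k) = {0} \<and>
     (\<forall>x :: nat \<Rightarrow> 'a. (\<forall>k. x (Suc k) - x k \<in> ideal_pow I k) \<longrightarrow>
        (\<exists>y. \<forall>k. y - x k \<in> ideal_pow I k))"

definition is_perfect :: "'a::comm_ring_1 set \<Rightarrow> ('a \<Rightarrow> 'a) \<Rightarrow> bool" where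
  "is_perfect I \<psi> \<longleftrightarrow> bij \<psi> \<and> \<psi> ` I = I"

end

theory Submission
  imports Defs
begin

(* Write q = p^h. The lift is the I_S-adic limit of the iterates of the twist
   F \<mapsto> \<psi>_S^-1 \<circ> F \<circ> \<psi>_R, started at \<mu>. The twist fixes exactly the \<psi>-equivariant maps, and it is a contraction: if two homomorphisms
   that agree on \<iota>_R(I_A) are congruent mod I_S^k, their twists are congruent mod I_S^(k+1).
   Indeed, \<psi>_R x = x^q + r with r in I_R, the ideal generated by \<iota>_R(I_A); on I_R the two maps
   already agree mod I_S^(k+1), and a \<equiv> b mod I_S^k implies a^q \<equiv> b^q mod I_S^(k+1) because q \<in> I_S.
   So the iterates converge, and two lifts, being fixed points, coincide. *)

declare ideal_pow.simps(2) [simp del]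

lemma ideal_0: "is_ideal I \<Longrightarrow> 0 \<in> I"
  by (simp add: is_ideal_def)

lemma ideal_add_closed: "is_ideal I \<Longrightarrow> x \<in> I \<Longrightarrow> y \<in> I \<Longrightarrow> x + y \<in> I"
  by (simp add: is_ideal_def)

lemma ideal_mult_left_closed: "is_ideal I \<Longrightarrow> x \<in> I \<Longrightarrow> r * x \<in> I"
  by (simp add: is_ideal_def)

lemma ideal_mult_right_closed: "is_ideal I \<Longrightarrow> x \<in> I \<Longrightarrow> x * r \<in> I"
  using ideal_mult_left_closed[of I x r] by (simp add: mult.commute)

lemma ideal_uminus_closed: "is_ideal I \<Longrightarrow> x \<in> I \<Longrightarrow> - x \<in> I"
  using ideal_mult_left_closed[of I x "-1"] by simp

lemma ideal_diff_closed: "is_ideal I \<Longrightarrow> x \<in> I \<Longrightarrow> y \<in> I \<Longrightarrow> x - y \<in> I"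
  using ideal_add_closed[of I x "-y"] ideal_uminus_closed[of I y] by simp

lemma ideal_sum_closed: "is_ideal I \<Longrightarrow> (\<And>i. i \<in> A \<Longrightarrow> f i \<in> I) \<Longrightarrow> sum f A \<in> I"
  by (induct A rule: infinite_finite_induct) (auto simp: ideal_0 ideal_add_closed)

lemma is_ideal_ideal_span: "is_ideal (ideal_span X)"
  unfolding ideal_span_def is_ideal_def by auto

lemma ideal_span_superset: "X \<subseteq> ideal_span X"
  unfolding ideal_span_def by auto

lemma ideal_span_least: "is_ideal J \<Longrightarrow> X \<subseteq> J \<Longrightarrow> ideal_span X \<subseteq> J"
  unfolding ideal_span_def by auto

lemma ideal_span_mono: "X \<subseteq> Y \<Longrightarrow> ideal_span X \<subseteq> ideal_span Y"
  using ideal_span_least[OF is_ideal_ideal_span, of X Y] ideal_span_superset[of Y] by blast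

lemma is_ideal_ideal_pow: "is_ideal (ideal_pow I k)"
  by (cases k) (simp_all add: ideal_pow.simps is_ideal_ideal_span is_ideal_def[of UNIV])

lemma ideal_pow_mult: "a \<in> I \<Longrightarrow> b \<in> ideal_pow I k \<Longrightarrow> a * b \<in> ideal_pow I (Suc k)"
  using ideal_span_superset by (fastforce simp: ideal_pow.simps)

lemma ideal_pow_Suc_0: "is_ideal I \<Longrightarrow> ideal_pow I (Suc 0) = I"
proof
  assume I: "is_ideal I"
  have "{a * b |a b. a \<in> I \<and> b \<in> ideal_pow I 0} \<subseteq> I"
    using I by (auto simp: ideal_mult_right_closed)
  then show "ideal_pow I (Suc 0) \<subseteq> I"
    using ideal_span_least[OF I] by (simp add: ideal_pow.simps)
  show "I \<subseteq> ideal_pow I (Suc 0)"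
    using ideal_pow_mult[of _ I 1 0] by auto
qed

lemma ideal_pow_Suc_subset: "ideal_pow I (Suc k) \<subseteq> ideal_pow I k"
proof (induct k)
  case (Suc k)
  then have "{a * b |a b. a \<in> I \<and> b \<in> ideal_pow I (Suc k)} \<subseteq> {a * b |a b. a \<in> I \<and> b \<in> ideal_pow I k}"
    by blast
  then show ?case
    unfolding ideal_pow.simps(2) by (rule ideal_span_mono)
qed (simp add: ideal_pow.simps)

lemma ideal_pow_antimono: "m \<le> n \<Longrightarrow> ideal_pow I n \<subseteq> ideal_pow I m"
  by (induct n rule: dec_induct) (use ideal_pow_Suc_subset in blast)+

lemma ring_hom_1: "is_ring_hom f \<Longrightarrow> f 1 = 1"
  by (simp add: is_ring_hom_def)

lemma ring_hom_add: "is_ring_hom f \<Longrightarrow> f (x + y) = f x + f y"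
  by (simp add: is_ring_hom_def)

lemma ring_hom_mult: "is_ring_hom f \<Longrightarrow> f (x * y) = f x * f y"
  by (simp add: is_ring_hom_def)

lemma ring_hom_0: "is_ring_hom f \<Longrightarrow> f 0 = 0"
  using ring_hom_add[of f 0 0] by simp

lemma ring_hom_uminus: "is_ring_hom f \<Longrightarrow> f (- x) = - f x"
  using ring_hom_add[of f x "-x"] ring_hom_0[of f] by (metis add.right_inverse neg_eq_iff_add_eq_0)

lemma ring_hom_diff: "is_ring_hom f \<Longrightarrow> f (x - y) = f x - f y"
  using ring_hom_add[of f x "-y"] ring_hom_uminus[of f y] by simp

lemma ring_hom_power: "is_ring_hom f \<Longrightarrow> f (x ^ n) = f x ^ n"
  by (induct n) (auto simp: ring_hom_1 ring_hom_mult)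

lemma ring_hom_comp: "is_ring_hom f \<Longrightarrow> is_ring_hom g \<Longrightarrow> is_ring_hom (f \<circ> g)"
  by (simp add: is_ring_hom_def)

lemma ring_hom_inv:
  assumes "is_ring_hom f" and "bij f"
  shows "is_ring_hom (inv f)"
proof -
  have "f (inv f y) = y" and "inv f (f x) = x" for x y
    using assms(2) by (simp_all add: bij_is_surj surj_f_inv_f bij_is_inj)
  then show ?thesis
    unfolding is_ring_hom_def by (metis ring_hom_add[OF assms(1)] ring_hom_mult[OF assms(1)] ring_hom_1[OF assms(1)])
qed

lemma ring_hom_image_ideal_span:
  assumes "is_ring_hom f"
  shows "f ` ideal_span X \<subseteq> ideal_span (f ` X)"
proof -
  have "is_ideal {x. f x \<in> ideal_span (f ` X)}"
    using is_ideal_ideal_span[of "f ` X"] unfolding is_ideal_def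
    by (auto simp: ring_hom_0[OF assms] ring_hom_add[OF assms] ring_hom_mult[OF assms])
  moreover have "X \<subseteq> {x. f x \<in> ideal_span (f ` X)}"
    using ideal_span_superset by blast
  ultimately show ?thesis
    using ideal_span_least by blast
qed

lemma ring_hom_image_ideal_pow:
  assumes "is_ring_hom f" and "f ` I \<subseteq> J"
  shows "f ` ideal_pow I k \<subseteq> ideal_pow J k"
proof (induct k)
  case (Suc k)
  then have "f ` {a * b |a b. a \<in> I \<and> b \<in> ideal_pow I k} \<subseteq> {a * b |a b. a \<in> J \<and> b \<in> ideal_pow J k}"
    using assms by (force simp: ring_hom_mult[OF assms(1)])
  then show ?case
    unfolding ideal_pow.simps(2)
    by (rule order.trans[OF ring_hom_image_ideal_span[OF assms(1)] ideal_span_mono])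
qed simp

lemma perfect_inv: "is_perfect I \<psi> \<Longrightarrow> is_perfect I (inv \<psi>)"
  unfolding is_perfect_def by (metis bij_imp_bij_inv bij_is_inj image_inv_f_f)

lemma perfect_image_ideal_pow:
  "is_ring_hom \<psi> \<Longrightarrow> is_perfect I \<psi> \<Longrightarrow> \<psi> ` ideal_pow I k \<subseteq> ideal_pow I k"
  by (simp add: is_perfect_def ring_hom_image_ideal_pow)

lemma power_diff_in_ideal_pow_Suc:
  assumes I: "is_ideal I" and q: "of_nat q \<in> I" and k: "k \<ge> 1"
    and ab: "a - b \<in> ideal_pow I k"
  shows "a ^ q - b ^ q \<in> ideal_pow I (Suc k)"
proof -
  define S where "S = (\<Sum>i<q. b ^ (q - Suc i) * a ^ i)"
  have "a - b \<in> I"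
    using ab ideal_pow_antimono[OF k] ideal_pow_Suc_0[OF I] by (auto simp: One_nat_def)
  then have "a ^ i - b ^ i \<in> I" for i
    using power_diff_sumr2[of a i b] ideal_mult_right_closed[OF I] by metis
  then have "(\<Sum>i<q. b ^ (q - Suc i) * (a ^ i - b ^ i)) \<in> I"
    by (simp add: ideal_sum_closed[OF I] ideal_mult_left_closed[OF I])
  moreover have "(\<Sum>i<q. b ^ (q - Suc i) * (a ^ i - b ^ i)) = (\<Sum>i<q. b ^ (q - Suc i) * a ^ i - b ^ (q - 1))"
    by (rule sum.cong) (simp_all add: right_diff_distrib flip: power_add)
  ultimately have "S - of_nat q * b ^ (q - 1) \<in> I"
    by (simp add: S_def sum_subtractf)
  then have "S \<in> I"
    using ideal_add_closed[OF I _ ideal_mult_right_closed[OF I q], of _ "b ^ (q - 1)"] by fastforce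
  moreover have "a ^ q - b ^ q = S * (a - b)"
    by (simp add: S_def power_diff_sumr2 mult.commute)
  ultimately show ?thesis
    using ideal_pow_mult[OF _ ab] by simp
qed

lemma hom_diff_in_ideal_pow_Suc_on_span:
  assumes I: "is_ideal I" and F: "is_ring_hom F" and G: "is_ring_hom G"
    and agree: "\<And>x. x \<in> X \<Longrightarrow> F x = G x" and GX: "G ` X \<subseteq> I"
    and diff: "\<And>y. F y - G y \<in> ideal_pow I k"
    and r: "r \<in> ideal_span X"
  shows "F r - G r \<in> ideal_pow I (Suc k)"
proof -
  let ?T = "{r. F r - G r \<in> ideal_pow I (Suc k) \<and> G r \<in> I}"
  note P = is_ideal_ideal_pow[of I "Suc k"]
  have "is_ideal ?T"
    unfolding is_ideal_def
  proof (intro conjI ballI allI)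
    show "0 \<in> ?T"
      by (simp add: ring_hom_0[OF F] ring_hom_0[OF G] ideal_0[OF I] ideal_0[OF P])
  next
    fix x y
    assume x: "x \<in> ?T" and y: "y \<in> ?T"
    have "(F x - G x) + (F y - G y) \<in> ideal_pow I (Suc k)"
      using x y ideal_add_closed[OF P] by blast
    moreover have "G x + G y \<in> I"
      using x y ideal_add_closed[OF I] by blast
    ultimately show "x + y \<in> ?T"
      by (simp add: ring_hom_add[OF F] ring_hom_add[OF G] algebra_simps)
  next
    fix s x
    assume "x \<in> ?T"
    moreover have "F (s * x) - G (s * x) = F s * (F x - G x) + G x * (F s - G s)"
      by (simp add: ring_hom_mult[OF F] ring_hom_mult[OF G] algebra_simps)
    ultimately show "s * x \<in> ?T"
      using diff[of s] by (simp add: ring_hom_mult[OF G] ideal_add_closed[OF P] ideal_mult_left_closed[OF P]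
          ideal_mult_left_closed[OF I] ideal_pow_mult)
  qed
  moreover have "X \<subseteq> ?T"
    using agree GX ideal_0[OF P] by auto
  ultimately show ?thesis
    using r ideal_span_least by blast
qed

lemma hom_diff_in_ideal_pow_Suc:
  assumes I: "is_ideal I" and q: "of_nat q \<in> I"
    and F: "is_ring_hom F" and G: "is_ring_hom G"
    and agree: "\<And>x. x \<in> X \<Longrightarrow> F x = G x" and GX: "G ` X \<subseteq> I"
    and k: "k \<ge> 1" and diff: "\<And>y. F y - G y \<in> ideal_pow I k"
    and z: "z - x ^ q \<in> ideal_span X"
  shows "F z - G z \<in> ideal_pow I (Suc k)"
proof -
  have "F z - G z = (F (z - x ^ q) - G (z - x ^ q)) + (F x ^ q - G x ^ q)"
    by (simp add: ring_hom_diff[OF F] ring_hom_diff[OF G] ring_hom_power[OF F] ring_hom_power[OF G])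
  also have "\<dots> \<in> ideal_pow I (Suc k)"
    using hom_diff_in_ideal_pow_Suc_on_span[OF I F G agree GX diff z]
      power_diff_in_ideal_pow_Suc[OF I q k diff]
    by (rule ideal_add_closed[OF is_ideal_ideal_pow])
  finally show ?thesis .
qed

lemma complete_eqI:
  assumes "is_complete I" and "\<And>k. a - b \<in> ideal_pow I k"
  shows "a = b"
proof -
  have "a - b \<in> (\<Inter>k. ideal_pow I k)"
    using assms(2) by blast
  also have "(\<Inter>k. ideal_pow I k) = {0}"
    using assms(1) by (simp add: is_complete_def)
  finally show ?thesis
    by simp
qed

lemma complete_pointwise_limit:
  assumes "is_complete I" and "\<And>k x. M (Suc k) x - M k x \<in> ideal_pow I k"
  obtains L where "\<And>k x. L x - M k x \<in> ideal_pow I k"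
proof -
  have "\<exists>l. \<forall>k. l - M k x \<in> ideal_pow I k" for x
    using assms unfolding is_complete_def by (auto dest: spec[where x = "\<lambda>k. M k x"])
  then show ?thesis
    using that choice[of "\<lambda>x l. \<forall>k. l - M k x \<in> ideal_pow I k"] by blast
qed

lemma ring_hom_limit:
  assumes I: "is_complete I" and M: "\<And>k. is_ring_hom (M k)"
    and L: "\<And>k x. L x - M k x \<in> ideal_pow I k"
  shows "is_ring_hom L"
  unfolding is_ring_hom_def
proof (intro conjI allI)
  note P = is_ideal_ideal_pow[of I]
  have "L 1 - 1 \<in> ideal_pow I k" for k
    using L[of 1 k] by (simp add: ring_hom_1[OF M])
  then show "L 1 = 1"
    by (rule complete_eqI[OF I])
  fix x y
  show "L (x + y) = L x + L y"
  proof (rule complete_eqI[OF I])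
    fix k
    have "L (x + y) - (L x + L y) = (L (x + y) - M k (x + y)) - (L x - M k x) - (L y - M k y)"
      by (simp add: ring_hom_add[OF M] algebra_simps)
    also have "\<dots> \<in> ideal_pow I k"
      by (rule ideal_diff_closed[OF P ideal_diff_closed[OF P L L] L])
    finally show "L (x + y) - (L x + L y) \<in> ideal_pow I k" .
  qed
  show "L (x * y) = L x * L y"
  proof (rule complete_eqI[OF I])
    fix k
    have "L (x * y) - L x * L y = (L (x * y) - M k (x * y)) - M k x * (L y - M k y) - L y * (L x - M k x)"
      by (simp add: ring_hom_mult[OF M] algebra_simps)
    also have "\<dots> \<in> ideal_pow I k"
      by (rule ideal_diff_closed[OF P ideal_diff_closed[OF P L ideal_mult_left_closed[OF P L]]
            ideal_mult_left_closed[OF P L]])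
    finally show "L (x * y) - L x * L y \<in> ideal_pow I k" .
  qed
qed

locale Frobenius_lifting =
  fixes q :: nat
    and IA :: "'a::comm_ring_1 set" and \<psi>A :: "'a \<Rightarrow> 'a"
    and IR :: "'r::comm_ring_1 set" and \<psi>R :: "'r \<Rightarrow> 'r"
    and IS :: "'s::comm_ring_1 set" and \<psi>S :: "'s \<Rightarrow> 's"
    and \<iota>R :: "'a \<Rightarrow> 'r" and \<iota>S :: "'a \<Rightarrow> 's"
  assumes ideal_IS: "is_ideal IS" and q_in_IS: "of_nat q \<in> IS"
    and ring_hom_\<psi>R: "is_ring_hom \<psi>R" and ring_hom_\<psi>S: "is_ring_hom \<psi>S"
    and \<psi>R_Frobenius: "\<psi>R x - x ^ q \<in> IR" and \<psi>S_Frobenius: "\<psi>S y - y ^ q \<in> IS"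
    and IR_eq: "IR = ideal_span (\<iota>R ` IA)" and \<iota>S_IA: "\<iota>S ` IA \<subseteq> IS"
    and \<iota>R_comm: "\<iota>R \<circ> \<psi>A = \<psi>R \<circ> \<iota>R" and \<iota>S_comm: "\<iota>S \<circ> \<psi>A = \<psi>S \<circ> \<iota>S"
    and complete_IS: "is_complete IS" and perfect_IS: "is_perfect IS \<psi>S"
begin

definition twist :: "('r \<Rightarrow> 's) \<Rightarrow> 'r \<Rightarrow> 's" where
  "twist F = inv \<psi>S \<circ> F \<circ> \<psi>R"

lemma \<psi>S_inv: "\<psi>S (inv \<psi>S y) = y" and inv_\<psi>S: "inv \<psi>S (\<psi>S y) = y"
  using perfect_IS by (simp_all add: is_perfect_def bij_is_surj surj_f_inv_f bij_is_inj)

lemma ring_hom_inv_\<psi>S: "is_ring_hom (inv \<psi>S)"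
  using ring_hom_inv[OF ring_hom_\<psi>S] perfect_IS by (simp add: is_perfect_def)

lemma inv_\<psi>S_ideal_pow: "y \<in> ideal_pow IS k \<Longrightarrow> inv \<psi>S y \<in> ideal_pow IS k"
  using perfect_image_ideal_pow[OF ring_hom_inv_\<psi>S perfect_inv[OF perfect_IS]] by blast

lemma \<psi>S_ideal_pow: "y \<in> ideal_pow IS k \<Longrightarrow> \<psi>S y \<in> ideal_pow IS k"
  using perfect_image_ideal_pow[OF ring_hom_\<psi>S perfect_IS] by blast

lemma twist_eq_self: "F \<circ> \<psi>R = \<psi>S \<circ> F \<Longrightarrow> twist F = F"
  by (simp add: twist_def fun_eq_iff inv_\<psi>S)

lemma ring_hom_twist: "is_ring_hom F \<Longrightarrow> is_ring_hom (twist F)"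
  unfolding twist_def by (intro ring_hom_comp ring_hom_inv_\<psi>S ring_hom_\<psi>R)

lemma twist_comp_\<iota>R:
  assumes "F \<circ> \<iota>R = \<iota>S"
  shows "twist F \<circ> \<iota>R = \<iota>S"
proof
  fix a
  have "F (\<psi>R (\<iota>R a)) = \<psi>S (\<iota>S a)"
    using assms fun_cong[OF \<iota>R_comm, of a] fun_cong[OF \<iota>S_comm, of a] by (metis comp_apply)
  then show "(twist F \<circ> \<iota>R) a = \<iota>S a"
    by (simp add: twist_def inv_\<psi>S)
qed

lemma image_IR_subset:
  assumes "is_ring_hom \<mu>" and "\<mu> \<circ> \<iota>R = \<iota>S"
  shows "\<mu> ` IR \<subseteq> IS"
proof -
  have "\<mu> ` IR \<subseteq> ideal_span (\<mu> ` \<iota>R ` IA)"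
    unfolding IR_eq by (rule ring_hom_image_ideal_span[OF assms(1)])
  also have "\<mu> ` \<iota>R ` IA = \<iota>S ` IA"
    using assms(2) by (simp add: image_comp)
  also have "ideal_span (\<iota>S ` IA) \<subseteq> IS"
    by (rule ideal_span_least[OF ideal_IS \<iota>S_IA])
  finally show ?thesis .
qed

lemma twist_diff_in_IS:
  assumes \<mu>: "is_ring_hom \<mu>" "\<mu> \<circ> \<iota>R = \<iota>S"
  shows "twist \<mu> x - \<mu> x \<in> IS"
proof -
  note \<mu>_IR = image_IR_subset[OF \<mu>]
  have "\<mu> (\<psi>R x) - \<psi>S (\<mu> x) = \<mu> (\<psi>R x - x ^ q) - (\<psi>S (\<mu> x) - \<mu> x ^ q)"
    by (simp add: ring_hom_diff[OF \<mu>(1)] ring_hom_power[OF \<mu>(1)])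
  also have "\<dots> \<in> IS"
    by (rule ideal_diff_closed[OF ideal_IS _ \<psi>S_Frobenius]) (use \<mu>_IR \<psi>R_Frobenius in blast)
  finally have "inv \<psi>S (\<mu> (\<psi>R x) - \<psi>S (\<mu> x)) \<in> IS"
    using inv_\<psi>S_ideal_pow[of _ "Suc 0"] by (simp add: ideal_pow_Suc_0[OF ideal_IS])
  then show ?thesis
    by (simp add: twist_def ring_hom_diff[OF ring_hom_inv_\<psi>S] inv_\<psi>S)
qed

lemma twist_contraction:
  assumes F: "is_ring_hom F" "F \<circ> \<iota>R = \<iota>S" and G: "is_ring_hom G" "G \<circ> \<iota>R = \<iota>S"
    and k: "k \<ge> 1" and diff: "\<And>y. F y - G y \<in> ideal_pow IS k"
  shows "twist F x - twist G x \<in> ideal_pow IS (Suc k)"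
proof -
  have "F (\<psi>R x) - G (\<psi>R x) \<in> ideal_pow IS (Suc k)"
    using F G \<iota>S_IA \<psi>R_Frobenius[of x] unfolding IR_eq
    by (intro hom_diff_in_ideal_pow_Suc[OF ideal_IS q_in_IS _ _ _ _ k diff])
      (auto simp: fun_eq_iff image_comp)
  then show ?thesis
    by (simp add: twist_def inv_\<psi>S_ideal_pow flip: ring_hom_diff[OF ring_hom_inv_\<psi>S])
qed

lemma equivariant_hom_eqI:
  assumes F: "is_ring_hom F" "F \<circ> \<iota>R = \<iota>S" "F \<circ> \<psi>R = \<psi>S \<circ> F"
    and G: "is_ring_hom G" "G \<circ> \<iota>R = \<iota>S" "G \<circ> \<psi>R = \<psi>S \<circ> G"
    and diff: "\<And>x. F x - G x \<in> IS"
  shows "F = G"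
proof -
  have congruent: "F x - G x \<in> ideal_pow IS k" if "k \<ge> 1" for k x
    using that
  proof (induct k arbitrary: x rule: nat_induct_at_least)
    case base
    then show ?case
      using diff by (simp add: ideal_pow_Suc_0[OF ideal_IS])
  next
    case (Suc k)
    then show ?case
      using twist_contraction[OF F(1,2) G(1,2) Suc.hyps(1)] twist_eq_self[OF F(3)] twist_eq_self[OF G(3)]
      by metis
  qed
  have "F x - G x \<in> ideal_pow IS k" for k x
    using congruent[of "Suc k" x] ideal_pow_Suc_subset by auto
  then show ?thesis
    by (auto intro: complete_eqI[OF complete_IS])
qed

lemma twist_iterates:
  assumes "is_ring_hom \<mu>" and "\<mu> \<circ> \<iota>R = \<iota>S"
  shows "is_ring_hom ((twist ^^ k) \<mu>)" and "(twist ^^ k) \<mu> \<circ> \<iota>R = \<iota>S"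
  by (induct k) (simp_all add: assms ring_hom_twist twist_comp_\<iota>R)

lemma twist_iterates_Cauchy:
  assumes \<mu>: "is_ring_hom \<mu>" "\<mu> \<circ> \<iota>R = \<iota>S"
  shows "(twist ^^ Suc k) \<mu> x - (twist ^^ k) \<mu> x \<in> ideal_pow IS (Suc k)"
proof -
  note hom = twist_iterates(1)[OF \<mu>] and comp = twist_iterates(2)[OF \<mu>]
  show ?thesis
  proof (induct k arbitrary: x)
    case 0
    then show ?case
      using twist_diff_in_IS[OF \<mu>] by (simp add: ideal_pow_Suc_0[OF ideal_IS])
  next
    case (Suc k)
    then show ?case
      using twist_contraction[OF hom[of "Suc k"] comp[of "Suc k"] hom[of k] comp[of k] _ Suc.hyps] by simp
  qed
qed

lemma limit_of_twist_iterates_equivariant: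
  assumes L: "\<And>k x. L x - (twist ^^ k) \<mu> x \<in> ideal_pow IS k"
  shows "L \<circ> \<psi>R = \<psi>S \<circ> L"
proof
  fix x
  show "(L \<circ> \<psi>R) x = (\<psi>S \<circ> L) x"
  proof (simp, rule complete_eqI[OF complete_IS])
    fix k
    have "L (\<psi>R x) - \<psi>S (L x) = (L (\<psi>R x) - (twist ^^ k) \<mu> (\<psi>R x)) - \<psi>S (L x - (twist ^^ Suc k) \<mu> x)"
      by (simp add: ring_hom_diff[OF ring_hom_\<psi>S] twist_def \<psi>S_inv)
    also have "\<dots> \<in> ideal_pow IS k"
      using \<psi>S_ideal_pow[OF subsetD[OF ideal_pow_Suc_subset L]]
      by (rule ideal_diff_closed[OF is_ideal_ideal_pow L])
    finally show "L (\<psi>R x) - \<psi>S (L x) \<in> ideal_pow IS k" .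
  qed
qed

lemma lift_exists:
  assumes \<mu>: "is_ring_hom \<mu>" "\<mu> \<circ> \<iota>R = \<iota>S"
  obtains L where "is_mor IR \<psi>R IS \<psi>S L" and "L \<circ> \<iota>R = \<iota>S" and "\<And>x. L x - \<mu> x \<in> IS"
proof -
  let ?M = "\<lambda>k. (twist ^^ k) \<mu>"
  have Cauchy: "?M (Suc k) x - ?M k x \<in> ideal_pow IS (Suc k)" for k x
    by (rule twist_iterates_Cauchy[OF \<mu>])
  then have "?M (Suc k) x - ?M k x \<in> ideal_pow IS k" for k x
    using ideal_pow_Suc_subset by blast
  then obtain L where L: "\<And>k x. L x - ?M k x \<in> ideal_pow IS k"
    by (rule complete_pointwise_limit[where M = ?M, OF complete_IS]) blast
  have L_\<mu>: "L x - \<mu> x \<in> IS" for x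
  proof -
    have "L x - \<mu> x = (L x - ?M (Suc 0) x) + (?M (Suc 0) x - ?M 0 x)"
      by simp
    also have "\<dots> \<in> ideal_pow IS (Suc 0)"
      by (rule ideal_add_closed[OF is_ideal_ideal_pow L Cauchy])
    finally show ?thesis
      by (simp add: ideal_pow_Suc_0[OF ideal_IS])
  qed
  have "L (\<iota>R a) = \<iota>S a" for a
  proof (rule complete_eqI[OF complete_IS])
    fix k
    have "L (\<iota>R a) - ?M k (\<iota>R a) \<in> ideal_pow IS k"
      by (rule L)
    then show "L (\<iota>R a) - \<iota>S a \<in> ideal_pow IS k"
      using fun_cong[OF twist_iterates(2)[OF \<mu>, of k], of a] by simp
  qed
  moreover have "L x \<in> IS" if "x \<in> IR" for x
  proof -
    have "(L x - \<mu> x) + \<mu> x \<in> IS"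
      using ideal_add_closed[OF ideal_IS L_\<mu>] image_IR_subset[OF \<mu>] that by blast
    then show ?thesis
      by simp
  qed
  ultimately have "is_mor IR \<psi>R IS \<psi>S L" and "L \<circ> \<iota>R = \<iota>S"
    using ring_hom_limit[OF complete_IS twist_iterates(1)[OF \<mu>] L] limit_of_twist_iterates_equivariant[OF L]
    by (auto simp: is_mor_def)
  then show ?thesis
    using that L_\<mu> by blast
qed

lemma lift_unique:
  assumes "is_mor IR \<psi>R IS \<psi>S F" and "F \<circ> \<iota>R = \<iota>S" and "\<And>x. F x - \<mu> x \<in> IS"
    and "is_mor IR \<psi>R IS \<psi>S G" and "G \<circ> \<iota>R = \<iota>S" and "\<And>x. G x - \<mu> x \<in> IS"
  shows "F = G"
proof (rule equivariant_hom_eqI)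
  show "is_ring_hom F" "F \<circ> \<psi>R = \<psi>S \<circ> F" "is_ring_hom G" "G \<circ> \<psi>R = \<psi>S \<circ> G"
    using assms(1,4) by (simp_all add: is_mor_def)
  fix x
  have "(F x - \<mu> x) - (G x - \<mu> x) \<in> IS"
    using assms(3,6) by (rule ideal_diff_closed[OF ideal_IS])
  then show "F x - G x \<in> IS"
    by simp
qed (fact assms(2,5))+

end

lemma Frobenius_liftingI:
  assumes "h \<ge> 1" and "is_obj p h IR \<psi>R" and "is_obj p h IS \<psi>S"
    and "is_mor IA \<psi>A IR \<psi>R \<iota>R" and "is_mor IA \<psi>A IS \<psi>S \<iota>S"
    and "IR = ideal_span (\<iota>R ` IA)" and "is_complete IS" and "is_perfect IS \<psi>S"
  shows "Frobenius_lifting (p ^ h) IA \<psi>A IR \<psi>R IS \<psi>S \<iota>R \<iota>S"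
proof -
  have R: "is_ring_hom \<psi>R" "\<And>x. \<psi>R x - x ^ (p ^ h) \<in> IR" "\<iota>R \<circ> \<psi>A = \<psi>R \<circ> \<iota>R"
    using assms(2,4) unfolding is_obj_def is_mor_def by simp_all
  have S: "is_ideal IS" "of_nat p \<in> IS" "is_ring_hom \<psi>S" "\<And>y. \<psi>S y - y ^ (p ^ h) \<in> IS"
      "\<iota>S ` IA \<subseteq> IS" "\<iota>S \<circ> \<psi>A = \<psi>S \<circ> \<iota>S"
    using assms(3,5) unfolding is_obj_def is_mor_def by simp_all
  obtain h' where "h = Suc h'"
    using assms(1) by (cases h) auto
  then have "of_nat (p ^ h) \<in> IS"
    using ideal_mult_right_closed[OF S(1,2)] by simp
  then show ?thesis
    by (intro Frobenius_lifting.intro) (simp_all add: R S assms(6-8) R(2)[unfolded assms(6)])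
qed

theorem proposition2p1:
  fixes p h :: nat
    and IA :: "'a::comm_ring_1 set" and \<psi>A :: "'a \<Rightarrow> 'a"
    and IR :: "'r::comm_ring_1 set" and \<psi>R :: "'r \<Rightarrow> 'r"
    and IS :: "'s::comm_ring_1 set" and \<psi>S :: "'s \<Rightarrow> 's"
    and \<iota>R :: "'a \<Rightarrow> 'r" and \<iota>S :: "'a \<Rightarrow> 's" and \<mu> :: "'r \<Rightarrow> 's"
  assumes "prime p" and "h \<ge> 1"
    and "is_obj p h IA \<psi>A" and "is_obj p h IR \<psi>R" and "is_obj p h IS \<psi>S"
    and "is_mor IA \<psi>A IR \<psi>R \<iota>R" and "is_mor IA \<psi>A IS \<psi>S \<iota>S"
    and "IR = ideal_span (\<iota>R ` IA)"
    and "is_complete IS" and "is_perfect IS \<psi>S"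
    and "is_ring_hom \<mu>" and "\<mu> \<circ> \<iota>R = \<iota>S"
  shows "\<exists>!\<mu>'. is_mor IR \<psi>R IS \<psi>S \<mu>' \<and> \<mu>' \<circ> \<iota>R = \<iota>S \<and> (\<forall>x. \<mu>' x - \<mu> x \<in> IS)"
proof -
  interpret Frobenius_lifting "p ^ h" IA \<psi>A IR \<psi>R IS \<psi>S \<iota>R \<iota>S
    using Frobenius_liftingI[OF assms(2,4-10)] .
  obtain L where L: "is_mor IR \<psi>R IS \<psi>S L" "L \<circ> \<iota>R = \<iota>S" "\<And>x. L x - \<mu> x \<in> IS"
    using lift_exists[OF assms(11,12)] by blast
  show ?thesis
  proof (rule ex1I)
    show "is_mor IR \<psi>R IS \<psi>S L \<and> L \<circ> \<iota>R = \<iota>S \<and> (\<forall>x. L x - \<mu> x \<in> IS)"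
      using L by blast
  next
    fix F
    assume "is_mor IR \<psi>R IS \<psi>S F \<and> F \<circ> \<iota>R = \<iota>S \<and> (\<forall>x. F x - \<mu> x \<in> IS)"
    then show "F = L"
      using lift_unique[OF _ _ _ L] by blast
  qed
qed

end
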